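(* Let $\nu_{AB}$ be a density operator on $\mathbb{C}^2\otimes\mathbb{C}^{d}$ whose marginal $\nu_A=\operatorname{tr}_B\nu_{AB}$ has spectrum $\{\frac{1-\eta}{2},\frac{1+\eta}{2}\}$ for some $\eta\in[0,1)$, and let $\mu_{AB}:=(\nu_A^{-1/2}\otimes\mathbb{1})\nu_{AB}(\nu_A^{-1/2}\otimes\mathbb{1})$. Then $$\mu_{AB}\ge s(\eta)\,\nu_{AB}-t(\eta)\,\frac{\mathbb{1}}{2}\otimes\nu_B,$$ where $\nu_B=\operatorname{tr}_A\nu_{AB}$, $s(\eta):=\frac{2}{\sqrt{1-\eta^2}}$ and $t(\eta):=\frac{4}{\sqrt{1-\eta^2}}-\frac{4}{1+\eta}$.
   Context: The inequality is in the positive semidefinite (Loewner) order. *)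

theory Defs
  imports "Jordan_Normal_Form.Schur_Decomposition" "Jordan_Normal_Form.Spectral_Radius"
begin

text \<open>Matrices on C^2 (x) C^d are represented as complex (2*d) x (2*d) matrices,
  with the basis |i> (x) |k> corresponding to index i*d + k.\<close>

definition mtrace :: "complex mat \<Rightarrow> complex" where
  "mtrace A = (\<Sum>i<dim_row A. A $$ (i, i))"

definition psd :: "nat \<Rightarrow> complex mat \<Rightarrow> bool" where
  "psd n A \<longleftrightarrow> A \<in> carrier_mat n n \<and> mat_adjoint A = A \<and>
     (\<forall>v. dim_vec v = n \<longrightarrow> 0 \<le> Re (\<Sum>i<n. cnj (v $ i) * (A *\<^sub>v v) $ i))"

definition loewner_le :: "nat \<Rightarrow> complex mat \<Rightarrow> complex mat \<Rightarrow> bool" where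
  "loewner_le n A B \<longleftrightarrow> A \<in> carrier_mat n n \<and> B \<in> carrier_mat n n \<and> psd n (B - A)"

definition density_op :: "nat \<Rightarrow> complex mat \<Rightarrow> bool" where
  "density_op n A \<longleftrightarrow> psd n A \<and> mtrace A = 1"

definition kron :: "nat \<Rightarrow> nat \<Rightarrow> complex mat \<Rightarrow> complex mat \<Rightarrow> complex mat" where
  "kron dA dB A B = mat (dA * dB) (dA * dB)
     (\<lambda>(i, j). A $$ (i div dB, j div dB) * B $$ (i mod dB, j mod dB))"

text \<open>Partial traces: ptrace_B gives the A-marginal, ptrace_A gives the B-marginal.\<close>
definition ptrace_B :: "nat \<Rightarrow> nat \<Rightarrow> complex mat \<Rightarrow> complex mat" where
  "ptrace_B dA dB M = mat dA dA (\<lambda>(i, j). \<Sum>k<dB. M $$ (i * dB + k, j * dB + k))"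

definition ptrace_A :: "nat \<Rightarrow> nat \<Rightarrow> complex mat \<Rightarrow> complex mat" where
  "ptrace_A dA dB M = mat dB dB (\<lambda>(k, l). \<Sum>i<dA. M $$ (i * dB + k, i * dB + l))"

definition inv_sqrt :: "nat \<Rightarrow> complex mat \<Rightarrow> complex mat" where
  "inv_sqrt n A = (THE X. psd n X \<and> X * X * A = 1\<^sub>m n)"

definition s_fun :: "real \<Rightarrow> real" where
  "s_fun \<eta> = 2 / sqrt (1 - \<eta>\<^sup>2)"

definition t_fun :: "real \<Rightarrow> real" where
  "t_fun \<eta> = 4 / sqrt (1 - \<eta>\<^sup>2) - 4 / (1 + \<eta>)"

end

theory Submission
  imports Defs
begin

text \<open>Diagonalise \<open>\<nu>\<^sub>A = l\<^sub>1 u\<^sub>1u\<^sub>1\<^sup>* + l\<^sub>2 u\<^sub>2u\<^sub>2\<^sup>*\<close> with \<open>l\<^sub>1,\<^sub>2 = (1 \<mp> \<eta>)/2\<close>; then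
  \<open>\<nu>\<^sub>A\<^sup>-\<^sup>1\<^sup>/\<^sup>2 = y\<^sub>1 u\<^sub>1u\<^sub>1\<^sup>* + y\<^sub>2 u\<^sub>2u\<^sub>2\<^sup>*\<close> with \<open>y\<^sub>i = l\<^sub>i\<^sup>-\<^sup>1\<^sup>/\<^sup>2\<close>, the inverse square root being
  unique by the explicit square-root formula for positive \<open>2 \<times> 2\<close> matrices. Split a vector as
  \<open>x = u\<^sub>1 \<otimes> c\<^sub>1 + u\<^sub>2 \<otimes> c\<^sub>2\<close> with \<open>c\<^sub>i = (u\<^sub>i\<^sup>* \<otimes> \<one>) x\<close> and write \<open>\<nu>[w] = \<langle>w, \<nu> w\<rangle>\<close>.
  Since \<open>s = y\<^sub>1 y\<^sub>2\<close> the cross terms of \<open>\<langle>x, \<mu> x\<rangle>\<close> and \<open>s \<langle>x, \<nu> x\<rangle>\<close> cancel, and since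
  \<open>\<one>/2 \<otimes> \<nu>\<^sub>B\<close> has the form \<open>\<frac>1 2 \<Sum>\<^sub>a\<^sub>,\<^sub>b \<nu>[u\<^sub>a \<otimes> c\<^sub>b]\<close> and \<open>y\<^sub>2\<^sup>2 = s - t/2\<close>, the difference
  of the two sides of the inequality evaluated at \<open>x\<close> is
  \<open>(y\<^sub>1\<^sup>2 - s) \<nu>[u\<^sub>1 \<otimes> c\<^sub>1] + t/2 (\<nu>[u\<^sub>1 \<otimes> c\<^sub>1] + \<nu>[u\<^sub>2 \<otimes> c\<^sub>1] + \<nu>[u\<^sub>1 \<otimes> c\<^sub>2])\<close>,
  which is nonnegative because \<open>s \<le> y\<^sub>1\<^sup>2\<close> and \<open>t \<ge> 0\<close>.\<close>

section \<open>Hermitian matrices and sesquilinear forms\<close>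

definition hermitian :: "nat \<Rightarrow> complex mat \<Rightarrow> bool" where
  "hermitian n A \<longleftrightarrow> (\<forall>i<n. \<forall>j<n. A $$ (i, j) = cnj (A $$ (j, i)))"

text \<open>Vectors are functions \<open>nat \<Rightarrow> complex\<close> read on \<open>{..<n}\<close>, which avoids carrier
  bookkeeping for the many auxiliary vectors built from a given one.\<close>

definition sesq :: "nat \<Rightarrow> complex mat \<Rightarrow> (nat \<Rightarrow> complex) \<Rightarrow> (nat \<Rightarrow> complex) \<Rightarrow> complex" where
  "sesq n M x y = (\<Sum>i<n. \<Sum>j<n. cnj (x i) * M $$ (i, j) * y j)"

definition mat_apply :: "nat \<Rightarrow> complex mat \<Rightarrow> (nat \<Rightarrow> complex) \<Rightarrow> nat \<Rightarrow> complex" where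
  "mat_apply n K x i = (\<Sum>j<n. K $$ (i, j) * x j)"

lemma hermitian_cnj: "hermitian n A \<Longrightarrow> i < n \<Longrightarrow> j < n \<Longrightarrow> cnj (A $$ (i, j)) = A $$ (j, i)"
  unfolding hermitian_def by metis

lemma hermitianI: "(\<And>i j. i < n \<Longrightarrow> j < n \<Longrightarrow> cnj (A $$ (j, i)) = A $$ (i, j)) \<Longrightarrow> hermitian n A"
  unfolding hermitian_def by metis

lemma mat_adjoint_eq_iff_hermitian:
  assumes A: "A \<in> carrier_mat n n"
  shows "mat_adjoint A = A \<longleftrightarrow> hermitian n A"
proof -
  have adj: "mat_adjoint A $$ (i, j) = cnj (A $$ (j, i))" if "i < n" "j < n" for i j
    using A that unfolding mat_adjoint_def by (auto simp: mat_of_rows_def)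
  have "mat_adjoint A \<in> carrier_mat n n"
    using A unfolding mat_adjoint_def by auto
  then have "mat_adjoint A = A \<longleftrightarrow> (\<forall>i<n. \<forall>j<n. mat_adjoint A $$ (i, j) = A $$ (i, j))"
    using A by (metis carrier_matD eq_matI)
  then show ?thesis
    unfolding hermitian_def by (metis adj)
qed

lemma sesq_vec:
  assumes "M \<in> carrier_mat n n" "dim_vec v = n"
  shows "(\<Sum>i<n. cnj (v $ i) * (M *\<^sub>v v) $ i) = sesq n M (\<lambda>i. v $ i) (\<lambda>i. v $ i)"
  unfolding sesq_def
proof (rule sum.cong[OF refl])
  fix i assume "i \<in> {..<n}"
  then have "(M *\<^sub>v v) $ i = (\<Sum>j<n. M $$ (i, j) * v $ j)"
    using assms by (auto simp: scalar_prod_def atLeast0LessThan)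
  then show "cnj (v $ i) * (M *\<^sub>v v) $ i = (\<Sum>j<n. cnj (v $ i) * M $$ (i, j) * v $ j)"
    by (simp add: sum_distrib_left mult.assoc)
qed

lemma psd_carrier: "psd n M \<Longrightarrow> M \<in> carrier_mat n n"
  unfolding psd_def by simp

lemma psd_hermitian: "psd n M \<Longrightarrow> hermitian n M"
  unfolding psd_def using mat_adjoint_eq_iff_hermitian by blast

lemma psd_sesq_nonneg:
  assumes "psd n M"
  shows "0 \<le> Re (sesq n M x x)"
proof -
  have "0 \<le> Re (\<Sum>i<n. cnj (vec n x $ i) * (M *\<^sub>v vec n x) $ i)"
    using assms dim_vec[of n x] unfolding psd_def by blast
  also have "(\<Sum>i<n. cnj (vec n x $ i) * (M *\<^sub>v vec n x) $ i) = sesq n M x x"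
    unfolding sesq_vec[OF psd_carrier[OF assms] dim_vec] unfolding sesq_def by (intro sum.cong refl) auto
  finally show ?thesis .
qed

lemma psdI:
  assumes "M \<in> carrier_mat n n" "hermitian n M" "\<And>x. 0 \<le> Re (sesq n M x x)"
  shows "psd n M"
  unfolding psd_def using assms mat_adjoint_eq_iff_hermitian[OF assms(1)] sesq_vec[OF assms(1)] by auto

lemma sesq_cong:
  "(\<And>i. i < n \<Longrightarrow> x i = x' i) \<Longrightarrow> (\<And>i. i < n \<Longrightarrow> y i = y' i) \<Longrightarrow> sesq n M x y = sesq n M x' y'"
  unfolding sesq_def by (intro sum.cong refl) auto

lemma sesq_diff:
  assumes "A \<in> carrier_mat n n" "B \<in> carrier_mat n n"
  shows "sesq n (A - B) x y = sesq n A x y - sesq n B x y"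
proof -
  have "sesq n (A - B) x y = (\<Sum>i<n. \<Sum>j<n. cnj (x i) * A $$ (i, j) * y j - cnj (x i) * B $$ (i, j) * y j)"
    unfolding sesq_def by (intro sum.cong refl) (use assms in \<open>auto simp: algebra_simps\<close>)
  then show ?thesis
    unfolding sesq_def by (simp add: sum_subtractf)
qed

lemma sesq_smult:
  assumes "A \<in> carrier_mat n n"
  shows "sesq n (c \<cdot>\<^sub>m A) x y = c * sesq n A x y"
proof -
  have "sesq n (c \<cdot>\<^sub>m A) x y = (\<Sum>i<n. \<Sum>j<n. c * (cnj (x i) * A $$ (i, j) * y j))"
    unfolding sesq_def by (intro sum.cong refl) (use assms in \<open>auto simp: algebra_simps\<close>)
  then show ?thesis
    unfolding sesq_def by (simp add: sum_distrib_left)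
qed

lemma sesq_add_left: "sesq n M (\<lambda>i. f i + g i) y = sesq n M f y + sesq n M g y"
  unfolding sesq_def by (simp add: distrib_right sum.distrib)

lemma sesq_add_right: "sesq n M x (\<lambda>i. f i + g i) = sesq n M x f + sesq n M x g"
  unfolding sesq_def by (simp add: distrib_left sum.distrib)

lemma sesq_scale_left: "sesq n M (\<lambda>i. c * f i) y = cnj c * sesq n M f y"
  unfolding sesq_def by (simp add: sum_distrib_left mult.assoc)

lemma sesq_scale_right: "sesq n M x (\<lambda>i. c * f i) = c * sesq n M x f"
  unfolding sesq_def by (simp add: sum_distrib_left mult_ac)

lemma sesq_mult_right:
  assumes "A \<in> carrier_mat n n" "B \<in> carrier_mat n n"
  shows "sesq n (A * B) x y = sesq n A x (mat_apply n B y)"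
proof -
  have "sesq n (A * B) x y = (\<Sum>i<n. \<Sum>j<n. \<Sum>k<n. cnj (x i) * A $$ (i, k) * B $$ (k, j) * y j)"
    unfolding sesq_def using assms
    by (intro sum.cong refl) (simp add: scalar_prod_def atLeast0LessThan sum_distrib_left sum_distrib_right mult.assoc)
  also have "\<dots> = (\<Sum>i<n. \<Sum>k<n. \<Sum>j<n. cnj (x i) * A $$ (i, k) * B $$ (k, j) * y j)"
    by (intro sum.cong refl sum.swap)
  also have "\<dots> = sesq n A x (mat_apply n B y)"
    unfolding sesq_def mat_apply_def by (simp add: sum_distrib_left mult.assoc)
  finally show ?thesis .
qed

lemma sesq_mult_left:
  assumes "A \<in> carrier_mat n n" "B \<in> carrier_mat n n" "hermitian n A"
  shows "sesq n (A * B) x y = sesq n B (mat_apply n A x) y"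
proof -
  have "sesq n (A * B) x y = (\<Sum>i<n. \<Sum>j<n. \<Sum>k<n. cnj (x i) * A $$ (i, k) * B $$ (k, j) * y j)"
    unfolding sesq_def using assms
    by (intro sum.cong refl) (simp add: scalar_prod_def atLeast0LessThan sum_distrib_left sum_distrib_right mult.assoc)
  also have "\<dots> = (\<Sum>i<n. \<Sum>k<n. \<Sum>j<n. cnj (x i) * A $$ (i, k) * B $$ (k, j) * y j)"
    by (intro sum.cong refl sum.swap)
  also have "\<dots> = (\<Sum>k<n. \<Sum>i<n. \<Sum>j<n. cnj (x i) * A $$ (i, k) * B $$ (k, j) * y j)"
    by (rule sum.swap)
  also have "\<dots> = (\<Sum>k<n. \<Sum>j<n. \<Sum>i<n. cnj (x i) * A $$ (i, k) * B $$ (k, j) * y j)"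
    by (intro sum.cong refl sum.swap)
  also have "\<dots> = sesq n B (mat_apply n A x) y"
  proof -
    have "cnj (mat_apply n A x k) = (\<Sum>i<n. cnj (x i) * A $$ (i, k))" if "k < n" for k
      unfolding mat_apply_def using that by (simp add: hermitian_cnj[OF assms(3)] mult.commute)
    then show ?thesis
      unfolding sesq_def by (simp add: sum_distrib_right mult.assoc)
  qed
  finally show ?thesis .
qed

lemma sesq_conj:
  assumes "K \<in> carrier_mat n n" "M \<in> carrier_mat n n" "hermitian n K"
  shows "sesq n (K * M * K) x x = sesq n M (mat_apply n K x) (mat_apply n K x)"
proof -
  have "sesq n (K * M * K) x x = sesq n (K * M) x (mat_apply n K x)"
    by (rule sesq_mult_right) (use assms in auto)
  also have "\<dots> = sesq n M (mat_apply n K x) (mat_apply n K x)"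
    using assms by (simp add: sesq_mult_left)
  finally show ?thesis .
qed

lemma hermitian_conj:
  assumes "K \<in> carrier_mat n n" "M \<in> carrier_mat n n" "hermitian n K" "hermitian n M"
  shows "hermitian n (K * M * K)"
proof (rule hermitianI)
  fix i j assume ij: "i < n" "j < n"
  have entry: "(K * M * K) $$ (i, j) = (\<Sum>a<n. \<Sum>b<n. K $$ (i, a) * M $$ (a, b) * K $$ (b, j))"
    if "i < n" "j < n" for i j
    using assms that by (simp add: scalar_prod_def atLeast0LessThan sum_distrib_left sum_distrib_right mult.assoc)
  have "cnj ((K * M * K) $$ (j, i)) = (\<Sum>a<n. \<Sum>b<n. K $$ (i, b) * M $$ (b, a) * K $$ (a, j))"
    unfolding entry[OF ij(2,1)] using ij
    by (simp add: hermitian_cnj[OF assms(3)] hermitian_cnj[OF assms(4)] mult_ac)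
  also have "\<dots> = (K * M * K) $$ (i, j)"
    unfolding entry[OF ij] by (rule sum.swap)
  finally show "cnj ((K * M * K) $$ (j, i)) = (K * M * K) $$ (i, j)" .
qed

lemma hermitian_one_mat: "hermitian n (1\<^sub>m n)"
  by (rule hermitianI) simp

lemma hermitian_smult_one_mat: "cnj c = c \<Longrightarrow> hermitian n (c \<cdot>\<^sub>m 1\<^sub>m n)"
  by (rule hermitianI) simp

lemma hermitian_diff:
  "A \<in> carrier_mat n n \<Longrightarrow> B \<in> carrier_mat n n \<Longrightarrow> hermitian n A \<Longrightarrow> hermitian n B \<Longrightarrow> hermitian n (A - B)"
  by (rule hermitianI) (simp add: hermitian_cnj)

lemma hermitian_smult_real:
  "A \<in> carrier_mat n n \<Longrightarrow> hermitian n A \<Longrightarrow> hermitian n (complex_of_real r \<cdot>\<^sub>m A)"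
  by (rule hermitianI) (simp add: hermitian_cnj)

lemma sum_lessThan_2: "(\<Sum>m<(2::nat). f m) = f 0 + f 1"
  by (simp add: numeral_2_eq_2)

lemma eq_mat2I:
  assumes "A \<in> carrier_mat 2 2" "B \<in> carrier_mat 2 2"
    "A $$ (0, 0) = B $$ (0, 0)" "A $$ (0, 1) = B $$ (0, 1)" "A $$ (1, 0) = B $$ (1, 0)" "A $$ (1, 1) = B $$ (1, 1)"
  shows "A = B"
proof (rule eq_matI)
  fix i j assume "i < dim_row B" "j < dim_col B"
  then have "i = 0 \<or> i = 1" "j = 0 \<or> j = 1" using assms by auto
  then show "A $$ (i, j) = B $$ (i, j)" using assms by auto
qed (use assms in auto)

lemma index_mult_mat_2:
  assumes "A \<in> carrier_mat 2 2" "B \<in> carrier_mat 2 2" "i < 2" "j < 2"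
  shows "(A * B) $$ (i, j) = A $$ (i, 0) * B $$ (0, j) + A $$ (i, 1) * B $$ (1, j)"
  using assms by (simp add: scalar_prod_def sum_lessThan_2 atLeast0LessThan)

definition orthonormal2 :: "(nat \<Rightarrow> complex) \<Rightarrow> (nat \<Rightarrow> complex) \<Rightarrow> bool" where
  "orthonormal2 u1 u2 \<longleftrightarrow>
     cnj (u1 0) * u1 0 + cnj (u1 1) * u1 1 = 1 \<and> cnj (u2 0) * u2 0 + cnj (u2 1) * u2 1 = 1 \<and>
     cnj (u1 0) * u2 0 + cnj (u1 1) * u2 1 = 0"

text \<open>Orthonormal columns of a square matrix make it unitary, so its rows are orthonormal too.\<close>

lemma orthonormal2_resolution:
  assumes "orthonormal2 u1 u2" "j < 2" "j' < 2"
  shows "u1 j * cnj (u1 j') + u2 j * cnj (u2 j') = (if j = j' then 1 else 0)"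
proof -
  define V where "V = mat 2 2 (\<lambda>(i, m). if m = 0 then u1 i else u2 i)"
  define W where "W = mat 2 2 (\<lambda>(m, i). if m = 0 then cnj (u1 i) else cnj (u2 i))"
  have VW: "V \<in> carrier_mat 2 2" "W \<in> carrier_mat 2 2"
    unfolding V_def W_def by auto
  have entries: "V $$ (i, 0) = u1 i" "V $$ (i, Suc 0) = u2 i" "W $$ (0, i) = cnj (u1 i)" "W $$ (Suc 0, i) = cnj (u2 i)"
    if "i < 2" for i
    using that unfolding V_def W_def by auto
  have "cnj (cnj (u1 0) * u2 0 + cnj (u1 1) * u2 1) = 0"
    using assms(1) unfolding orthonormal2_def by simp
  then have "cnj (u2 0) * u1 0 + cnj (u2 1) * u1 1 = 0"
    by (simp add: mult.commute)
  then have "W * V = 1\<^sub>m 2"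
    using assms(1) VW unfolding orthonormal2_def
    by (intro eq_mat2I) (simp_all add: index_mult_mat_2 entries del: index_mult_mat)
  then have "V * W = 1\<^sub>m 2"
    using mat_mult_left_right_inverse[OF VW(2,1)] by simp
  moreover have "(V * W) $$ (j, j') = u1 j * cnj (u1 j') + u2 j * cnj (u2 j')"
    using assms(2,3) by (simp add: index_mult_mat_2[OF VW] entries del: index_mult_mat)
  ultimately show ?thesis
    using assms(2,3) by simp
qed

section \<open>Block structure of \<open>\<complex>\<^sup>2 \<otimes> \<complex>\<^sup>d\<close>\<close>

lemma sum_lessThan_2_mult:
  fixes f :: "nat \<Rightarrow> 'a::comm_monoid_add"
  shows "(\<Sum>l<2 * d. f l) = (\<Sum>m<2. \<Sum>k<d. f (m * d + k))"
proof -
  have "(\<Sum>l<2 * d. f l) = (\<Sum>m<2. sum f {m * d..<m * d + d})"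
    using sum.nat_group[of f d 2] by (simp add: mult.commute)
  also have "\<dots> = (\<Sum>m<2. \<Sum>k<d. f (m * d + k))"
  proof (rule sum.cong[OF refl])
    fix m
    show "sum f {m * d..<m * d + d} = (\<Sum>k<d. f (m * d + k))"
      using sum.shift_bounds_nat_ivl[of f 0 "m * d" d] by (simp add: atLeast0LessThan add.commute)
  qed
  finally show ?thesis .
qed

lemma block_index_less: "j < 2 \<Longrightarrow> k < d \<Longrightarrow> j * d + k < 2 * (d::nat)"
  by (cases "j = 0") (auto dest: less_2_cases)

lemma div_less_2: "(a::nat) < 2 * d \<Longrightarrow> a div d < 2"
  by (simp add: less_mult_imp_div_less mult.commute)

lemma kron_carrier: "kron dA dB A B \<in> carrier_mat (dA * dB) (dA * dB)"
  unfolding kron_def by simp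

lemma kron_index:
  "i < dA * dB \<Longrightarrow> j < dA * dB \<Longrightarrow> kron dA dB A B $$ (i, j) = A $$ (i div dB, j div dB) * B $$ (i mod dB, j mod dB)"
  unfolding kron_def by simp

lemma hermitian_kron:
  assumes "hermitian 2 A" "hermitian d B" "0 < d"
  shows "hermitian (2 * d) (kron 2 d A B)"
proof (rule hermitianI)
  fix i j assume ij: "i < 2 * d" "j < 2 * d"
  then have "i div d < 2" "j div d < 2" "i mod d < d" "j mod d < d"
    using div_less_2 assms(3) by auto
  then show "cnj (kron 2 d A B $$ (j, i)) = kron 2 d A B $$ (i, j)"
    using assms ij by (simp add: kron_index hermitian_cnj)
qed

lemma hermitian_ptrace_A:
  assumes "hermitian (2 * d) M"
  shows "hermitian d (ptrace_A 2 d M)"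
proof (rule hermitianI)
  fix k l assume "k < d" "l < d"
  then show "cnj (ptrace_A 2 d M $$ (l, k)) = ptrace_A 2 d M $$ (k, l)"
    using assms unfolding ptrace_A_def by (simp add: sum_lessThan_2 hermitian_cnj)
qed

lemma sesq_blocks:
  "sesq (2 * d) M x y =
    (\<Sum>k<d. \<Sum>k'<d. \<Sum>j<2. \<Sum>j'<2. cnj (x (j * d + k)) * M $$ (j * d + k, j' * d + k') * y (j' * d + k'))"
proof -
  have "sesq (2 * d) M x y =
      (\<Sum>j<2. \<Sum>k<d. \<Sum>j'<2. \<Sum>k'<d. cnj (x (j * d + k)) * M $$ (j * d + k, j' * d + k') * y (j' * d + k'))"
    unfolding sesq_def sum_lessThan_2_mult[of _ d] ..
  also have "\<dots> =
      (\<Sum>k<d. \<Sum>j<2. \<Sum>j'<2. \<Sum>k'<d. cnj (x (j * d + k)) * M $$ (j * d + k, j' * d + k') * y (j' * d + k'))"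
    by (rule sum.swap)
  also have "\<dots> =
      (\<Sum>k<d. \<Sum>j<2. \<Sum>k'<d. \<Sum>j'<2. cnj (x (j * d + k)) * M $$ (j * d + k, j' * d + k') * y (j' * d + k'))"
    by (intro sum.cong refl sum.swap)
  also have "\<dots> =
      (\<Sum>k<d. \<Sum>k'<d. \<Sum>j<2. \<Sum>j'<2. cnj (x (j * d + k)) * M $$ (j * d + k, j' * d + k') * y (j' * d + k'))"
    by (intro sum.cong refl sum.swap)
  finally show ?thesis .
qed

text \<open>In the basis of \<open>kron\<close>, \<open>tensor_fun d u c\<close> is \<open>u \<otimes> c\<close> and
  \<open>contract_fst d u x\<close> is \<open>(u\<^sup>* \<otimes> \<one>) x\<close>.\<close>

definition tensor_fun :: "nat \<Rightarrow> (nat \<Rightarrow> complex) \<Rightarrow> (nat \<Rightarrow> complex) \<Rightarrow> nat \<Rightarrow> complex" where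
  "tensor_fun d u c a = u (a div d) * c (a mod d)"

definition contract_fst :: "nat \<Rightarrow> (nat \<Rightarrow> complex) \<Rightarrow> (nat \<Rightarrow> complex) \<Rightarrow> nat \<Rightarrow> complex" where
  "contract_fst d u x k = (\<Sum>j<2. cnj (u j) * x (j * d + k))"

lemma tensor_fun_decomp:
  assumes "orthonormal2 u1 u2" "0 < d" "a < 2 * d"
  shows "x a = tensor_fun d u1 (contract_fst d u1 x) a + tensor_fun d u2 (contract_fst d u2 x) a"
proof -
  note U = orthonormal2_resolution[OF assms(1)]
  have "tensor_fun d u1 (contract_fst d u1 x) a + tensor_fun d u2 (contract_fst d u2 x) a
      = (u1 (a div d) * cnj (u1 0) + u2 (a div d) * cnj (u2 0)) * x (a mod d)
      + (u1 (a div d) * cnj (u1 1) + u2 (a div d) * cnj (u2 1)) * x (d + a mod d)"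
    unfolding tensor_fun_def contract_fst_def by (simp add: sum_lessThan_2 algebra_simps)
  also have "\<dots> = x a"
  proof (cases "a < d")
    case True
    then show ?thesis using U[of 0 0] U[of 0 1] by simp
  next
    case False
    then have "a div d \<noteq> 0"
      using assms(2) by (simp add: div_eq_0_iff)
    then have "a div d = 1"
      using div_less_2[OF assms(3)] by linarith
    moreover have "a = d * (a div d) + a mod d"
      by simp
    ultimately have "a = d + a mod d"
      by simp
    with \<open>a div d = 1\<close> show ?thesis
      using U[of 1 0] U[of 1 1] by simp
  qed
  finally show ?thesis by simp
qed

lemma sesq_tensor_fun:
  "sesq (2 * d) M (tensor_fun d u c) (tensor_fun d u c) =
    (\<Sum>k<d. \<Sum>k'<d. (\<Sum>j<2. \<Sum>j'<2. cnj (u j) * M $$ (j * d + k, j' * d + k') * u j') * (cnj (c k) * c k'))"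
  unfolding sesq_blocks
  by (intro sum.cong refl) (simp add: tensor_fun_def sum_lessThan_2 algebra_simps)

lemma sesq_kron_half_id_ptrace_A:
  assumes "0 < d"
  shows "sesq (2 * d) (kron 2 d ((1 / 2) \<cdot>\<^sub>m 1\<^sub>m 2) (ptrace_A 2 d M)) x x =
    (\<Sum>k<d. \<Sum>k'<d. (1 / 2) * ((\<Sum>j<2. cnj (x (j * d + k)) * x (j * d + k')) * (\<Sum>i<2. M $$ (i * d + k, i * d + k'))))"
  unfolding sesq_blocks
proof (intro sum.cong refl)
  fix k k' assume "k \<in> {..<d}" "k' \<in> {..<d}"
  then have "k < 2 * d" "d + k < 2 * d" "k' < 2 * d" "d + k' < 2 * d" "(d + k) div d = 1" "(d + k') div d = 1"
    "(d + k) mod d = k" "(d + k') mod d = k'" "k div d = 0" "k' div d = 0"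
    by auto
  then show "(\<Sum>j<2. \<Sum>j'<2. cnj (x (j * d + k)) * kron 2 d ((1 / 2) \<cdot>\<^sub>m 1\<^sub>m 2) (ptrace_A 2 d M) $$ (j * d + k, j' * d + k') * x (j' * d + k')) =
      (1 / 2) * ((\<Sum>j<2. cnj (x (j * d + k)) * x (j * d + k')) * (\<Sum>i<2. M $$ (i * d + k, i * d + k')))"
    by (simp add: sum_lessThan_2 kron_index ptrace_A_def algebra_simps)
qed

lemma orthonormal2_trace:
  assumes "orthonormal2 u1 u2"
  shows "(\<Sum>j<2. \<Sum>j'<2. cnj (u1 j) * N j j' * u1 j') + (\<Sum>j<2. \<Sum>j'<2. cnj (u2 j) * N j j' * u2 j') = N 0 0 + N 1 1"
proof -
  note U = orthonormal2_resolution[OF assms]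
  have "(\<Sum>j<2. \<Sum>j'<2. cnj (u1 j) * N j j' * u1 j') + (\<Sum>j<2. \<Sum>j'<2. cnj (u2 j) * N j j' * u2 j')
      = (\<Sum>j<2. \<Sum>j'<2. N j j' * (u1 j' * cnj (u1 j) + u2 j' * cnj (u2 j)))"
    by (simp add: sum_lessThan_2 algebra_simps)
  also have "\<dots> = N 0 0 + N 1 1"
    using U[of 0 0] U[of 0 1] U[of 1 0] U[of 1 1] by (simp add: sum_lessThan_2)
  finally show ?thesis .
qed

lemma orthonormal2_contract_fst_inner:
  assumes "orthonormal2 u1 u2"
  shows "cnj (contract_fst d u1 x k) * contract_fst d u1 x k' + cnj (contract_fst d u2 x k) * contract_fst d u2 x k'
    = (\<Sum>j<2. cnj (x (j * d + k)) * x (j * d + k'))"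
proof -
  note U = orthonormal2_resolution[OF assms]
  have "cnj (contract_fst d u1 x k) * contract_fst d u1 x k' + cnj (contract_fst d u2 x k) * contract_fst d u2 x k'
      = (\<Sum>j<2. \<Sum>j'<2. cnj (x (j * d + k)) * x (j' * d + k') * (u1 j * cnj (u1 j') + u2 j * cnj (u2 j')))"
    unfolding contract_fst_def by (simp add: sum_lessThan_2 algebra_simps)
  also have "\<dots> = (\<Sum>j<2. cnj (x (j * d + k)) * x (j * d + k'))"
    using U[of 0 0] U[of 0 1] U[of 1 0] U[of 1 1] by (simp add: sum_lessThan_2)
  finally show ?thesis .
qed

lemma sesq_kron_half_id_ptrace_A_orthonormal2:
  fixes x :: "nat \<Rightarrow> complex"
  assumes "0 < d" "orthonormal2 u1 u2"
  defines "c1 \<equiv> contract_fst d u1 x" and "c2 \<equiv> contract_fst d u2 x"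
  shows "sesq (2 * d) (kron 2 d ((1 / 2) \<cdot>\<^sub>m 1\<^sub>m 2) (ptrace_A 2 d M)) x x =
    (1 / 2) * (sesq (2 * d) M (tensor_fun d u1 c1) (tensor_fun d u1 c1) + sesq (2 * d) M (tensor_fun d u2 c1) (tensor_fun d u2 c1)
      + sesq (2 * d) M (tensor_fun d u1 c2) (tensor_fun d u1 c2) + sesq (2 * d) M (tensor_fun d u2 c2) (tensor_fun d u2 c2))"
proof -
  define N where "N k k' j j' = M $$ (j * d + k, j' * d + k')" for k k' j j'
  define h where "h u c k k' = (\<Sum>j<2. \<Sum>j'<2. cnj (u j) * N k k' j j' * u j') * (cnj (c k) * c k')"
    for u c :: "nat \<Rightarrow> complex" and k k'
  have "sesq (2 * d) (kron 2 d ((1 / 2) \<cdot>\<^sub>m 1\<^sub>m 2) (ptrace_A 2 d M)) x x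
      = (\<Sum>k<d. \<Sum>k'<d. (1 / 2) * (h u1 c1 k k' + h u2 c1 k k' + h u1 c2 k k' + h u2 c2 k k'))"
    unfolding sesq_kron_half_id_ptrace_A[OF assms(1)]
  proof (intro sum.cong refl)
    fix k k'
    have "h u1 c1 k k' + h u2 c1 k k' + h u1 c2 k k' + h u2 c2 k k'
        = ((\<Sum>j<2. \<Sum>j'<2. cnj (u1 j) * N k k' j j' * u1 j') + (\<Sum>j<2. \<Sum>j'<2. cnj (u2 j) * N k k' j j' * u2 j'))
          * (cnj (c1 k) * c1 k' + cnj (c2 k) * c2 k')"
      unfolding h_def by (simp add: algebra_simps)
    also have "\<dots> = (\<Sum>i<2. M $$ (i * d + k, i * d + k')) * (\<Sum>j<2. cnj (x (j * d + k)) * x (j * d + k'))"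
      unfolding orthonormal2_trace[OF assms(2)] c1_def c2_def orthonormal2_contract_fst_inner[OF assms(2)]
      by (simp add: N_def sum_lessThan_2)
    finally show "1 / 2 * ((\<Sum>j<2. cnj (x (j * d + k)) * x (j * d + k')) * (\<Sum>i<2. M $$ (i * d + k, i * d + k')))
        = 1 / 2 * (h u1 c1 k k' + h u2 c1 k k' + h u1 c2 k k' + h u2 c2 k k')"
      by (simp add: mult.commute)
  qed
  also have "\<dots> = (1 / 2) * ((\<Sum>k<d. \<Sum>k'<d. h u1 c1 k k') + (\<Sum>k<d. \<Sum>k'<d. h u2 c1 k k')
      + (\<Sum>k<d. \<Sum>k'<d. h u1 c2 k k') + (\<Sum>k<d. \<Sum>k'<d. h u2 c2 k k'))"
    by (simp add: sum.distrib distrib_left sum_distrib_left)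
  finally show ?thesis
    unfolding sesq_tensor_fun h_def N_def .
qed

section \<open>Matrices with a prescribed orthonormal eigenbasis\<close>

definition eigen2 :: "complex mat \<Rightarrow> real \<Rightarrow> (nat \<Rightarrow> complex) \<Rightarrow> bool" where
  "eigen2 A l u \<longleftrightarrow> (\<forall>i<2. mat_apply 2 A u i = of_real l * u i)"

lemma eigen2_iff:
  "eigen2 A l u \<longleftrightarrow>
    A $$ (0, 0) * u 0 + A $$ (0, 1) * u 1 = of_real l * u 0 \<and> A $$ (1, 0) * u 0 + A $$ (1, 1) * u 1 = of_real l * u 1"
  unfolding eigen2_def mat_apply_def by (auto simp: sum_lessThan_2 less_2_cases_iff)

definition spectral2 :: "real \<Rightarrow> real \<Rightarrow> (nat \<Rightarrow> complex) \<Rightarrow> (nat \<Rightarrow> complex) \<Rightarrow> complex mat" where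
  "spectral2 y1 y2 u1 u2 = mat 2 2 (\<lambda>(j, j'). of_real y1 * u1 j * cnj (u1 j') + of_real y2 * u2 j * cnj (u2 j'))"

lemma spectral2_carrier: "spectral2 y1 y2 u1 u2 \<in> carrier_mat 2 2"
  unfolding spectral2_def by simp

lemma spectral2_index:
  "i < 2 \<Longrightarrow> j < 2 \<Longrightarrow> spectral2 y1 y2 u1 u2 $$ (i, j) = of_real y1 * u1 i * cnj (u1 j) + of_real y2 * u2 i * cnj (u2 j)"
  unfolding spectral2_def by simp

lemma hermitian_spectral2: "hermitian 2 (spectral2 y1 y2 u1 u2)"
  by (rule hermitianI) (simp add: spectral2_index mult_ac)

lemma psd_spectral2:
  assumes "0 \<le> y1" "0 \<le> y2"
  shows "psd 2 (spectral2 y1 y2 u1 u2)"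
proof (rule psdI[OF spectral2_carrier hermitian_spectral2])
  fix x :: "nat \<Rightarrow> complex"
  define z1 where "z1 = cnj (u1 0) * x 0 + cnj (u1 1) * x 1"
  define z2 where "z2 = cnj (u2 0) * x 0 + cnj (u2 1) * x 1"
  have "sesq 2 (spectral2 y1 y2 u1 u2) x x = of_real y1 * (cnj z1 * z1) + of_real y2 * (cnj z2 * z2)"
    unfolding sesq_def z1_def z2_def by (simp add: sum_lessThan_2 spectral2_index algebra_simps)
  moreover have "0 \<le> Re (cnj z * z)" for z :: complex
    by (simp flip: power2_eq_square)
  ultimately show "0 \<le> Re (sesq 2 (spectral2 y1 y2 u1 u2) x x)"
    using assms by simp
qed

lemma spectral2_mult:
  assumes "orthonormal2 u1 u2"
  shows "spectral2 a1 a2 u1 u2 * spectral2 b1 b2 u1 u2 = spectral2 (a1 * b1) (a2 * b2) u1 u2"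
proof (rule eq_mat2I)
  have "cnj (cnj (u1 0) * u2 0 + cnj (u1 1) * u2 1) = 0"
    using assms unfolding orthonormal2_def by simp
  then have orth: "cnj (u2 0) * u1 0 + cnj (u2 1) * u1 1 = 0"
    by (simp add: mult.commute)
  have "(spectral2 a1 a2 u1 u2 * spectral2 b1 b2 u1 u2) $$ (i, j) = spectral2 (a1 * b1) (a2 * b2) u1 u2 $$ (i, j)"
    if "i < 2" "j < 2" for i j
  proof -
    have "(spectral2 a1 a2 u1 u2 * spectral2 b1 b2 u1 u2) $$ (i, j) =
      of_real a1 * of_real b1 * u1 i * cnj (u1 j) * (cnj (u1 0) * u1 0 + cnj (u1 1) * u1 1)
      + of_real a1 * of_real b2 * u1 i * cnj (u2 j) * (cnj (u1 0) * u2 0 + cnj (u1 1) * u2 1)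
      + of_real a2 * of_real b1 * u2 i * cnj (u1 j) * (cnj (u2 0) * u1 0 + cnj (u2 1) * u1 1)
      + of_real a2 * of_real b2 * u2 i * cnj (u2 j) * (cnj (u2 0) * u2 0 + cnj (u2 1) * u2 1)"
      using that by (simp add: index_mult_mat_2[OF spectral2_carrier spectral2_carrier] spectral2_index algebra_simps)
    also have "\<dots> = spectral2 (a1 * b1) (a2 * b2) u1 u2 $$ (i, j)"
      using assms orth that unfolding orthonormal2_def by (simp add: spectral2_index)
    finally show ?thesis .
  qed
  then show "(spectral2 a1 a2 u1 u2 * spectral2 b1 b2 u1 u2) $$ (0, 0) = spectral2 (a1 * b1) (a2 * b2) u1 u2 $$ (0, 0)"
    "(spectral2 a1 a2 u1 u2 * spectral2 b1 b2 u1 u2) $$ (0, 1) = spectral2 (a1 * b1) (a2 * b2) u1 u2 $$ (0, 1)"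
    "(spectral2 a1 a2 u1 u2 * spectral2 b1 b2 u1 u2) $$ (1, 0) = spectral2 (a1 * b1) (a2 * b2) u1 u2 $$ (1, 0)"
    "(spectral2 a1 a2 u1 u2 * spectral2 b1 b2 u1 u2) $$ (1, 1) = spectral2 (a1 * b1) (a2 * b2) u1 u2 $$ (1, 1)"
    by simp_all
qed (simp_all add: spectral2_carrier mult_carrier_mat[OF spectral2_carrier spectral2_carrier])

lemma spectral2_mult_eigen:
  assumes A: "A \<in> carrier_mat 2 2" "hermitian 2 A" and u: "eigen2 A l1 u1" "eigen2 A l2 u2"
  shows "spectral2 a1 a2 u1 u2 * A = spectral2 (a1 * l1) (a2 * l2) u1 u2"
proof -
  have row: "cnj (u 0) * A $$ (0, j) + cnj (u 1) * A $$ (1, j) = of_real l * cnj (u j)"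
    if "eigen2 A l u" "j < 2" for u l j
  proof -
    have "cnj (A $$ (j, 0) * u 0 + A $$ (j, 1) * u 1) = cnj (of_real l * u j)"
      using that unfolding eigen2_def mat_apply_def by (simp add: sum_lessThan_2)
    then show ?thesis
      using that(2) by (simp add: hermitian_cnj[OF A(2)] mult.commute)
  qed
  have "(spectral2 a1 a2 u1 u2 * A) $$ (i, j) = spectral2 (a1 * l1) (a2 * l2) u1 u2 $$ (i, j)"
    if "i < 2" "j < 2" for i j
  proof -
    have "(spectral2 a1 a2 u1 u2 * A) $$ (i, j) =
      of_real a1 * u1 i * (cnj (u1 0) * A $$ (0, j) + cnj (u1 1) * A $$ (1, j))
      + of_real a2 * u2 i * (cnj (u2 0) * A $$ (0, j) + cnj (u2 1) * A $$ (1, j))"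
      using that by (simp add: index_mult_mat_2[OF spectral2_carrier A(1)] spectral2_index algebra_simps)
    then show ?thesis
      using that row[OF u(1) that(2)] row[OF u(2) that(2)] by (simp add: spectral2_index)
  qed
  then show ?thesis
    using A(1) by (intro eq_mat2I) (simp_all add: spectral2_carrier mult_carrier_mat[OF spectral2_carrier A(1)] del: index_mult_mat)
qed

lemma spectral2_one:
  assumes "orthonormal2 u1 u2"
  shows "spectral2 1 1 u1 u2 = 1\<^sub>m 2"
  by (rule eq_mat2I) (simp_all add: spectral2_carrier spectral2_index orthonormal2_resolution[OF assms])

lemma mat_apply_kron_one:
  assumes "0 < d" "a < 2 * d"
  shows "mat_apply (2 * d) (kron 2 d Y (1\<^sub>m d)) x a = (\<Sum>m<2. Y $$ (a div d, m) * x (m * d + a mod d))"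
proof -
  have "mat_apply (2 * d) (kron 2 d Y (1\<^sub>m d)) x a
      = (\<Sum>m<2. \<Sum>k<d. kron 2 d Y (1\<^sub>m d) $$ (a, m * d + k) * x (m * d + k))"
    unfolding mat_apply_def by (rule sum_lessThan_2_mult)
  also have "\<dots> = (\<Sum>m<2. \<Sum>k<d. if k = a mod d then Y $$ (a div d, m) * x (m * d + a mod d) else 0)"
    using assms by (intro sum.cong refl) (simp add: kron_index block_index_less)
  also have "\<dots> = (\<Sum>m<2. Y $$ (a div d, m) * x (m * d + a mod d))"
    using assms by simp
  finally show ?thesis .
qed

lemma mat_apply_kron_spectral2:
  assumes "0 < d" "a < 2 * d"
  shows "mat_apply (2 * d) (kron 2 d (spectral2 y1 y2 u1 u2) (1\<^sub>m d)) x a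
    = of_real y1 * tensor_fun d u1 (contract_fst d u1 x) a + of_real y2 * tensor_fun d u2 (contract_fst d u2 x) a"
  unfolding mat_apply_kron_one[OF assms] tensor_fun_def contract_fst_def
  using div_less_2[OF assms(2)] by (simp add: sum_lessThan_2 spectral2_index algebra_simps)

section \<open>The operator inequality for a given eigenbasis\<close>

lemma sesq_expand_orthonormal2:
  fixes x :: "nat \<Rightarrow> complex"
  assumes "orthonormal2 u1 u2" "0 < d"
  defines "W1 \<equiv> tensor_fun d u1 (contract_fst d u1 x)" and "W2 \<equiv> tensor_fun d u2 (contract_fst d u2 x)"
  shows "sesq (2 * d) M x x = sesq (2 * d) M W1 W1 + sesq (2 * d) M W1 W2 + sesq (2 * d) M W2 W1 + sesq (2 * d) M W2 W2"
proof -
  have "sesq (2 * d) M x x = sesq (2 * d) M (\<lambda>a. W1 a + W2 a) (\<lambda>a. W1 a + W2 a)"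
    unfolding W1_def W2_def by (rule sesq_cong; rule tensor_fun_decomp[OF assms(1,2)])
  then show ?thesis
    by (simp add: sesq_add_left sesq_add_right)
qed

lemma sesq_conj_kron_spectral2:
  fixes x u1 u2 :: "nat \<Rightarrow> complex" and y1 y2 :: real
  assumes "0 < d" "M \<in> carrier_mat (2 * d) (2 * d)"
  defines "K \<equiv> kron 2 d (spectral2 y1 y2 u1 u2) (1\<^sub>m d)"
    and "W1 \<equiv> tensor_fun d u1 (contract_fst d u1 x)" and "W2 \<equiv> tensor_fun d u2 (contract_fst d u2 x)"
  shows "sesq (2 * d) (K * M * K) x x = of_real (y1 * y1) * sesq (2 * d) M W1 W1
    + of_real (y1 * y2) * (sesq (2 * d) M W1 W2 + sesq (2 * d) M W2 W1) + of_real (y2 * y2) * sesq (2 * d) M W2 W2"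
proof -
  have K: "K \<in> carrier_mat (2 * d) (2 * d)" "hermitian (2 * d) K"
    unfolding K_def by (auto intro: kron_carrier hermitian_kron hermitian_spectral2 hermitian_one_mat assms(1))
  have "sesq (2 * d) (K * M * K) x x = sesq (2 * d) M (mat_apply (2 * d) K x) (mat_apply (2 * d) K x)"
    by (rule sesq_conj[OF K(1) assms(2) K(2)])
  also have "\<dots> = sesq (2 * d) M (\<lambda>a. of_real y1 * W1 a + of_real y2 * W2 a) (\<lambda>a. of_real y1 * W1 a + of_real y2 * W2 a)"
    unfolding K_def W1_def W2_def by (rule sesq_cong; simp add: mat_apply_kron_spectral2[OF assms(1)])
  finally show ?thesis
    by (simp add: sesq_add_left sesq_add_right sesq_scale_left sesq_scale_right algebra_simps)
qed

lemma loewner_le_conj_kron_spectral2: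
  fixes y1 y2 s t :: real
  assumes d: "0 < d" and \<nu>: "psd (2 * d) \<nu>" and u: "orthonormal2 u1 u2"
    and y: "y1 * y2 = s" "y2\<^sup>2 = s - t / 2" "s \<le> y1\<^sup>2" "0 \<le> t"
  defines "K \<equiv> kron 2 d (spectral2 y1 y2 u1 u2) (1\<^sub>m d)"
    and "T \<equiv> kron 2 d ((1 / 2) \<cdot>\<^sub>m 1\<^sub>m 2) (ptrace_A 2 d \<nu>)"
  shows "loewner_le (2 * d) (complex_of_real s \<cdot>\<^sub>m \<nu> - complex_of_real t \<cdot>\<^sub>m T) (K * \<nu> * K)"
proof -
  have carrier: "\<nu> \<in> carrier_mat (2 * d) (2 * d)" "K \<in> carrier_mat (2 * d) (2 * d)" "T \<in> carrier_mat (2 * d) (2 * d)"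
    using psd_carrier[OF \<nu>] kron_carrier unfolding K_def T_def by auto
  have herm: "hermitian (2 * d) \<nu>" "hermitian (2 * d) K" "hermitian (2 * d) T"
    unfolding K_def T_def using psd_hermitian[OF \<nu>]
    by (auto intro!: hermitian_kron hermitian_spectral2 hermitian_one_mat hermitian_smult_one_mat hermitian_ptrace_A d)
  from y(1,2) have "s = y1 * y2" "t = 2 * (y1 * y2 - y2 * y2)"
    by (simp_all add: power2_eq_square)
  then have st: "complex_of_real s = of_real y1 * of_real y2"
    "complex_of_real t = 2 * (of_real y1 * of_real y2 - of_real y2 * of_real y2)"
    by simp_all
  let ?F = "K * \<nu> * K - (complex_of_real s \<cdot>\<^sub>m \<nu> - complex_of_real t \<cdot>\<^sub>m T)"
  let ?S = "sesq (2 * d) \<nu>"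
  have "0 \<le> Re (sesq (2 * d) ?F x x)" for x
  proof -
    define c1 where "c1 = contract_fst d u1 x"
    define c2 where "c2 = contract_fst d u2 x"
    define W1 where "W1 = tensor_fun d u1 c1"
    define W2 where "W2 = tensor_fun d u2 c2"
    have terms: "K * \<nu> * K \<in> carrier_mat (2 * d) (2 * d)" "complex_of_real s \<cdot>\<^sub>m \<nu> \<in> carrier_mat (2 * d) (2 * d)"
      "complex_of_real t \<cdot>\<^sub>m T \<in> carrier_mat (2 * d) (2 * d)"
      using carrier by auto
    have "sesq (2 * d) ?F x x = sesq (2 * d) (K * \<nu> * K) x x - (of_real s * ?S x x - of_real t * sesq (2 * d) T x x)"
      unfolding sesq_diff[OF terms(1) minus_carrier_mat[OF terms(3)]] sesq_diff[OF terms(2,3)]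
        sesq_smult[OF carrier(1)] sesq_smult[OF carrier(3)] ..
    also have "\<dots> = of_real (y1 * y1 - s) * ?S W1 W1
        + of_real (t / 2) * (?S W1 W1 + ?S (tensor_fun d u2 c1) (tensor_fun d u2 c1) + ?S (tensor_fun d u1 c2) (tensor_fun d u1 c2))"
      unfolding K_def sesq_conj_kron_spectral2[OF d carrier(1)] sesq_expand_orthonormal2[OF u d, of \<nu> x]
        T_def sesq_kron_half_id_ptrace_A_orthonormal2[OF d u] c1_def[symmetric] c2_def[symmetric]
        W1_def[symmetric] W2_def[symmetric]
      by (simp add: st field_simps)
    finally show ?thesis
      using y(3,4) psd_sesq_nonneg[OF \<nu>] by (simp add: power2_eq_square)
  qed
  then have "psd (2 * d) ?F"
    using carrier herm by (intro psdI hermitian_diff hermitian_conj hermitian_smult_real) auto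
  then show ?thesis
    unfolding loewner_le_def using carrier by auto
qed

section \<open>Eigenbases and square roots of \<open>2 \<times> 2\<close> matrices\<close>

lemma hermitian2_entries:
  assumes "hermitian 2 A"
  shows "A $$ (0, 0) = of_real (Re (A $$ (0, 0)))" "A $$ (1, 1) = of_real (Re (A $$ (1, 1)))"
    "A $$ (1, 0) = cnj (A $$ (0, 1))"
  using hermitian_cnj[OF assms, of 0 0] hermitian_cnj[OF assms, of 1 1] hermitian_cnj[OF assms, of 0 1]
  by (simp_all add: complex_eq_iff)

lemma psd2_entries:
  assumes "psd 2 X"
  shows "0 \<le> Re (X $$ (0, 0))" "0 \<le> Re (X $$ (1, 1))"
    "(cmod (X $$ (0, 1)))\<^sup>2 \<le> Re (X $$ (0, 0)) * Re (X $$ (1, 1))"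
proof -
  note X = hermitian2_entries[OF psd_hermitian[OF assms]]
  define P where "P = Re (X $$ (0, 0))"
  define R where "R = Re (X $$ (1, 1))"
  define qa where "qa = Re (X $$ (0, 1))"
  define qb where "qb = Im (X $$ (0, 1))"
  have q: "X $$ (0, 1) = Complex qa qb" "X $$ (1, 0) = Complex qa (- qb)"
    unfolding qa_def qb_def X(3) by (simp_all add: complex_eq_iff)
  have form: "Re (sesq 2 X v v) = P * ((Re (v 0))\<^sup>2 + (Im (v 0))\<^sup>2) + R * ((Re (v 1))\<^sup>2 + (Im (v 1))\<^sup>2)
     + 2 * (qa * (Re (v 0) * Re (v 1) + Im (v 0) * Im (v 1)) + qb * (Im (v 0) * Re (v 1) - Re (v 0) * Im (v 1)))" for v
    unfolding sesq_def sum_lessThan_2 using X(1,2) q unfolding P_def[symmetric] R_def[symmetric]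
    by (simp add: algebra_simps power2_eq_square)
  have pos: "0 \<le> Re (sesq 2 X v v)" for v
    using psd_sesq_nonneg[OF assms] .
  show P: "0 \<le> Re (X $$ (0, 0))" and R: "0 \<le> Re (X $$ (1, 1))"
    using pos[of "\<lambda>i. if i = 0 then 1 else 0"] pos[of "\<lambda>i. if i = 0 then 0 else 1"]
    unfolding form P_def R_def by simp_all
  \<comment> \<open>The test vectors \<open>(-q, P)\<close> and \<open>(R, -q\<^sup>*)\<close> give \<open>P det X \<ge> 0\<close> and \<open>R det X \<ge> 0\<close>;
    if \<open>P = R = 0\<close>, the vector \<open>(1, -q\<^sup>*)\<close> gives \<open>-2 |q|\<^sup>2 \<ge> 0\<close>.\<close>
  have "0 \<le> P * (P * R - (qa\<^sup>2 + qb\<^sup>2))"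
    using pos[of "\<lambda>i. if i = 0 then - Complex qa qb else of_real P"] unfolding form
    by (simp add: algebra_simps power2_eq_square)
  moreover have "0 \<le> R * (P * R - (qa\<^sup>2 + qb\<^sup>2))"
    using pos[of "\<lambda>i. if i = 0 then of_real R else - Complex qa (- qb)"] unfolding form
    by (simp add: algebra_simps power2_eq_square)
  moreover have "0 \<le> P + R * (qa\<^sup>2 + qb\<^sup>2) - 2 * (qa\<^sup>2 + qb\<^sup>2)"
    using pos[of "\<lambda>i. if i = 0 then 1 else - Complex qa (- qb)"] unfolding form
    by (simp add: algebra_simps power2_eq_square)
  ultimately have "qa\<^sup>2 + qb\<^sup>2 \<le> P * R"
    using P R unfolding P_def[symmetric] R_def[symmetric]
    by (cases "P = 0"; cases "R = 0") (auto simp: zero_le_mult_iff)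
  then show "(cmod (X $$ (0, 1)))\<^sup>2 \<le> Re (X $$ (0, 0)) * Re (X $$ (1, 1))"
    unfolding q P_def R_def by (simp add: cmod_def)
qed

text \<open>The classical formula \<open>\<surd>M = (M + \<surd>(det M) \<one>) / \<surd>(tr M + 2 \<surd>(det M))\<close> for a psd
  \<open>2 \<times> 2\<close> matrix, a consequence of Cayley--Hamilton; when \<open>M = 0\<close> the division by zero yields \<open>0\<close>.\<close>

definition sqrt_mat2 :: "complex mat \<Rightarrow> complex mat" where
  "sqrt_mat2 M =
    (let D = sqrt (Re (M $$ (0, 0)) * Re (M $$ (1, 1)) - (cmod (M $$ (0, 1)))\<^sup>2);
         \<tau> = sqrt (Re (M $$ (0, 0)) + Re (M $$ (1, 1)) + 2 * D)
     in complex_of_real (1 / \<tau>) \<cdot>\<^sub>m (M + complex_of_real D \<cdot>\<^sub>m 1\<^sub>m 2))"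

lemma psd2_eq_sqrt_mat2:
  assumes "psd 2 X"
  shows "X = sqrt_mat2 (X * X)"
proof -
  have XC: "X \<in> carrier_mat 2 2"
    using psd_carrier[OF assms] .
  note X = hermitian2_entries[OF psd_hermitian[OF assms]]
  define P where "P = Re (X $$ (0, 0))"
  define R where "R = Re (X $$ (1, 1))"
  define q where "q = X $$ (0, 1)"
  define Q where "Q = (cmod q)\<^sup>2"
  have PRQ: "0 \<le> P" "0 \<le> R" "Q \<le> P * R"
    using psd2_entries[OF assms] unfolding P_def R_def Q_def q_def by simp_all
  have Xe: "X $$ (0, 0) = of_real P" "X $$ (1, 1) = of_real R" "X $$ (0, 1) = q" "X $$ (1, 0) = cnj q"
    using X unfolding P_def R_def q_def by simp_all
  have qq: "cnj q * q = of_real Q" "q * cnj q = of_real Q"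
    using complex_norm_square[of q] unfolding Q_def by (simp_all add: mult.commute)
  have M: "(X * X) $$ (0, 0) = of_real (P * P + Q)" "(X * X) $$ (1, 1) = of_real (Q + R * R)"
    "(X * X) $$ (0, 1) = q * of_real (P + R)" "(X * X) $$ (1, 0) = cnj q * of_real (P + R)"
    by (simp_all add: index_mult_mat_2[OF XC XC] Xe[unfolded One_nat_def] qq algebra_simps)
  have "cmod ((X * X) $$ (0, 1)) = sqrt Q * (P + R)"
    unfolding M Q_def using PRQ by (simp add: norm_mult flip: of_real_add)
  then have "Re ((X * X) $$ (0, 0)) * Re ((X * X) $$ (1, 1)) - (cmod ((X * X) $$ (0, 1)))\<^sup>2 = (P * R - Q)\<^sup>2"
    unfolding M using PRQ Q_def by (simp add: power2_eq_square algebra_simps)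
  then have D: "sqrt (Re ((X * X) $$ (0, 0)) * Re ((X * X) $$ (1, 1)) - (cmod ((X * X) $$ (0, 1)))\<^sup>2) = P * R - Q"
    using PRQ by simp
  have "Re ((X * X) $$ (0, 0)) + Re ((X * X) $$ (1, 1)) + 2 * (P * R - Q) = (P + R)\<^sup>2"
    unfolding M by (simp add: power2_eq_square algebra_simps)
  then have \<tau>: "sqrt (Re ((X * X) $$ (0, 0)) + Re ((X * X) $$ (1, 1)) + 2 * (P * R - Q)) = P + R"
    using PRQ by simp
  show ?thesis
  proof (cases "P + R = 0")
    case True
    then have "P = 0" "R = 0"
      using PRQ by auto
    moreover have "q = 0"
      using PRQ(3) unfolding Q_def \<open>P = 0\<close> by simp
    ultimately show ?thesis
      unfolding sqrt_mat2_def Let_def D \<tau> using XC True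
      by (intro eq_mat2I) (simp_all add: Xe[unfolded One_nat_def] del: index_mult_mat)
  next
    case False
    then have "complex_of_real P + complex_of_real R \<noteq> 0"
      by (metis of_real_add of_real_eq_0_iff)
    then show ?thesis
      unfolding sqrt_mat2_def Let_def D \<tau> using XC
      by (intro eq_mat2I) (simp_all add: M[unfolded One_nat_def] Xe[unfolded One_nat_def] field_simps power2_eq_square del: index_mult_mat)
  qed
qed

lemma inv_sqrt_eqI:
  assumes A: "A \<in> carrier_mat 2 2" and X: "psd 2 X" "X * X * A = 1\<^sub>m 2"
  shows "inv_sqrt 2 A = X"
  unfolding inv_sqrt_def
proof (rule the_equality)
  show "psd 2 X \<and> X * X * A = 1\<^sub>m 2"
    using X by simp
  fix Y assume Y: "psd 2 Y \<and> Y * Y * A = 1\<^sub>m 2"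
  have XC: "X * X \<in> carrier_mat 2 2" and YC: "Y * Y \<in> carrier_mat 2 2"
    using psd_carrier[OF X(1)] psd_carrier[of 2 Y] Y by (meson mult_carrier_mat)+
  have "A * (X * X) = 1\<^sub>m 2"
    using mat_mult_left_right_inverse[OF XC A] X(2) by simp
  then have "Y * Y = (Y * Y) * (A * (X * X))"
    by (simp only: right_mult_one_mat[OF YC])
  also have "\<dots> = (Y * Y * A) * (X * X)"
    by (simp only: assoc_mult_mat[OF YC A XC])
  also have "\<dots> = X * X"
    using Y left_mult_one_mat[OF XC] by simp
  finally have "Y * Y = X * X" .
  then show "Y = X"
    using psd2_eq_sqrt_mat2 X(1) Y by metis
qed

lemma hermitian2_spectrum_char:
  assumes A: "A \<in> carrier_mat 2 2" "hermitian 2 A" and l: "complex_of_real l \<in> spectrum A"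
  shows "(l - Re (A $$ (0, 0))) * (l - Re (A $$ (1, 1))) = (cmod (A $$ (0, 1)))\<^sup>2"
proof -
  note Ae = hermitian2_entries[OF A(2)]
  define a where "a = complex_of_real (Re (A $$ (0, 0))) - of_real l"
  define c where "c = complex_of_real (Re (A $$ (1, 1))) - of_real l"
  define b where "b = A $$ (0, 1)"
  obtain v where v: "v \<in> carrier_vec 2" "v \<noteq> 0\<^sub>v 2" "A *\<^sub>v v = of_real l \<cdot>\<^sub>v v"
    using l A(1) unfolding spectrum_def eigenvalue_def eigenvector_def by auto
  have "eigen2 A l (\<lambda>i. v $ i)"
    unfolding eigen2_def mat_apply_def
  proof (intro allI impI)
    fix i :: nat assume "i < 2"
    then have "(A *\<^sub>v v) $ i = of_real l * v $ i"
      using v by simp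
    then show "(\<Sum>j<2. A $$ (i, j) * v $ j) = of_real l * v $ i"
      using \<open>i < 2\<close> A(1) v(1) by (simp add: scalar_prod_def atLeast0LessThan)
  qed
  then have eqs: "a * v $ 0 + b * v $ 1 = 0" "cnj b * v $ 0 + c * v $ 1 = 0"
    unfolding eigen2_iff a_def b_def c_def using Ae by (auto simp: algebra_simps)
  have "(a * c - b * cnj b) * v $ 0 = c * (a * v $ 0 + b * v $ 1) - b * (cnj b * v $ 0 + c * v $ 1)"
    "(a * c - b * cnj b) * v $ 1 = a * (cnj b * v $ 0 + c * v $ 1) - cnj b * (a * v $ 0 + b * v $ 1)"
    by (simp_all add: algebra_simps)
  moreover have "v $ 0 \<noteq> 0 \<or> v $ 1 \<noteq> 0"
    using v(1,2) by (auto simp: less_2_cases_iff)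
  ultimately have "a * c = b * cnj b"
    using eqs by auto
  have "complex_of_real ((l - Re (A $$ (0, 0))) * (l - Re (A $$ (1, 1)))) = a * c"
    unfolding a_def c_def by (simp add: algebra_simps)
  also have "\<dots> = b * cnj b"
    by fact
  also have "\<dots> = of_real ((cmod b)\<^sup>2)"
    by (rule complex_norm_square[symmetric])
  finally show ?thesis
    unfolding b_def of_real_eq_iff .
qed

definition eigvec2 :: "complex mat \<Rightarrow> real \<Rightarrow> nat \<Rightarrow> complex" where
  "eigvec2 A m i = (if i = 0 then A $$ (0, 1) else of_real (m - Re (A $$ (0, 0))))
     / of_real (sqrt ((cmod (A $$ (0, 1)))\<^sup>2 + (m - Re (A $$ (0, 0)))\<^sup>2))"

lemma eigvec2_eigen:
  assumes A: "hermitian 2 A" and b: "A $$ (0, 1) \<noteq> 0"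
    and m: "(m - Re (A $$ (0, 0))) * (m - Re (A $$ (1, 1))) = (cmod (A $$ (0, 1)))\<^sup>2"
  shows "eigen2 A m (eigvec2 A m)"
    "cnj (eigvec2 A m 0) * eigvec2 A m 0 + cnj (eigvec2 A m 1) * eigvec2 A m 1 = 1"
proof -
  define a where "a = Re (A $$ (0, 0))"
  define c where "c = Re (A $$ (1, 1))"
  define b where "b = A $$ (0, 1)"
  define n where "n = sqrt ((cmod b)\<^sup>2 + (m - a)\<^sup>2)"
  have Ae: "A $$ (0, 0) = of_real a" "A $$ (Suc 0, Suc 0) = of_real c" "A $$ (0, Suc 0) = b" "A $$ (Suc 0, 0) = cnj b"
    using hermitian2_entries[OF A] unfolding a_def b_def c_def by simp_all
  have bb: "cnj b * b = of_real ((cmod b)\<^sup>2)"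
    by (metis complex_norm_square mult.commute)
  have "0 < (cmod b)\<^sup>2"
    using b unfolding b_def by simp
  then have n: "0 < n" "n * n = (cmod b)\<^sup>2 + (m - a)\<^sup>2"
    unfolding n_def by (simp_all add: add_pos_nonneg)
  have "(cmod b)\<^sup>2 + c * (m - a) = m * (m - a)"
    using m unfolding a_def b_def c_def by (simp add: algebra_simps)
  then have "complex_of_real ((cmod b)\<^sup>2 + c * (m - a)) = of_real (m * (m - a))"
    by (rule arg_cong)
  then have "cnj b * b + of_real c * of_real (m - a) = of_real m * of_real (m - a)"
    unfolding bb by simp
  moreover have "complex_of_real ((cmod b)\<^sup>2 + (m - a) * (m - a)) = of_real (n * n)"
    using n(2) by (simp add: power2_eq_square)
  then have "cnj b * b + of_real (m - a) * of_real (m - a) = of_real n * of_real n"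
    unfolding bb by simp
  moreover have ev: "eigvec2 A m = (\<lambda>i. (if i = 0 then b else of_real (m - a)) / of_real n)"
    unfolding eigvec2_def a_def b_def n_def by simp
  ultimately show "eigen2 A m (eigvec2 A m)"
    "cnj (eigvec2 A m 0) * eigvec2 A m 0 + cnj (eigvec2 A m 1) * eigvec2 A m 1 = 1"
    using n(1) unfolding eigen2_iff ev by (simp_all add: Ae field_simps)
qed

lemma eigvec2_orthogonal:
  assumes "(l - Re (A $$ (0, 0))) * (l - Re (A $$ (1, 1))) = (cmod (A $$ (0, 1)))\<^sup>2"
  defines "l' \<equiv> Re (A $$ (0, 0)) + Re (A $$ (1, 1)) - l"
  shows "cnj (eigvec2 A l 0) * eigvec2 A l' 0 + cnj (eigvec2 A l 1) * eigvec2 A l' 1 = 0"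
proof -
  define a where "a = Re (A $$ (0, 0))"
  define b where "b = A $$ (0, 1)"
  have "(cmod b)\<^sup>2 + (l - a) * (l' - a) = 0"
    using assms unfolding a_def b_def by (simp add: algebra_simps)
  then have "cnj b * b + of_real (l - a) * of_real (l' - a) = 0"
    by (metis complex_norm_square mult.commute of_real_add of_real_mult of_real_0)
  moreover have "cnj (eigvec2 A l 0) * eigvec2 A l' 0 + cnj (eigvec2 A l 1) * eigvec2 A l' 1
      = (cnj b * b + of_real (l - a) * of_real (l' - a))
        / (of_real (sqrt ((cmod b)\<^sup>2 + (l - a)\<^sup>2)) * of_real (sqrt ((cmod b)\<^sup>2 + (l' - a)\<^sup>2)))"
  proof -
    have "eigvec2 A m = (\<lambda>i. (if i = 0 then b else of_real (m - a)) / of_real (sqrt ((cmod b)\<^sup>2 + (m - a)\<^sup>2)))"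
      for m
      unfolding eigvec2_def a_def b_def by simp
    then show ?thesis
      by (simp add: add_divide_distrib)
  qed
  ultimately show ?thesis
    by simp
qed

text \<open>Since the characteristic equation is invariant under \<open>l \<mapsto> tr A - l\<close>, \<open>l'\<close> solves it too;
  when \<open>A\<^sub>0\<^sub>1 \<noteq> 0\<close> the eigenvectors \<open>eigvec2 A l\<close> are explicit.\<close>

lemma hermitian2_eigenbasis:
  assumes A: "hermitian 2 A"
    and l: "(l - Re (A $$ (0, 0))) * (l - Re (A $$ (1, 1))) = (cmod (A $$ (0, 1)))\<^sup>2"
  defines "l' \<equiv> Re (A $$ (0, 0)) + Re (A $$ (1, 1)) - l"
  shows "\<exists>u1 u2. orthonormal2 u1 u2 \<and> eigen2 A l u1 \<and> eigen2 A l' u2"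
proof (cases "A $$ (0, 1) = 0")
  case True
  define a where "a = Re (A $$ (0, 0))"
  define c where "c = Re (A $$ (1, 1))"
  define e0 :: "nat \<Rightarrow> complex" where "e0 i = (if i = 0 then 1 else 0)" for i
  define e1 :: "nat \<Rightarrow> complex" where "e1 i = (if i = 0 then 0 else 1)" for i
  have e: "orthonormal2 e0 e1" "orthonormal2 e1 e0"
    unfolding orthonormal2_def e0_def e1_def by simp_all
  have Ae: "A $$ (0, 0) = of_real a" "A $$ (Suc 0, Suc 0) = of_real c" "A $$ (0, Suc 0) = 0" "A $$ (Suc 0, 0) = 0"
    using hermitian2_entries[OF A] True unfolding a_def c_def by simp_all
  have "(l - a) * (l - c) = 0"
    using l True unfolding a_def c_def by simp
  then have "l = a \<and> l' = c \<or> l = c \<and> l' = a"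
    unfolding l'_def a_def[symmetric] c_def[symmetric] by auto
  then show ?thesis
  proof
    assume "l = a \<and> l' = c"
    then show ?thesis
      using e by (intro exI[of _ e0] exI[of _ e1]) (simp add: eigen2_iff Ae e0_def e1_def)
  next
    assume "l = c \<and> l' = a"
    then show ?thesis
      using e by (intro exI[of _ e1] exI[of _ e0]) (simp add: eigen2_iff Ae e0_def e1_def)
  qed
next
  case False
  have "(l' - Re (A $$ (0, 0))) * (l' - Re (A $$ (1, 1))) = (cmod (A $$ (0, 1)))\<^sup>2"
    using l unfolding l'_def by (simp add: algebra_simps)
  then have "orthonormal2 (eigvec2 A l) (eigvec2 A l') \<and> eigen2 A l (eigvec2 A l) \<and> eigen2 A l' (eigvec2 A l')"
    using eigvec2_eigen[OF A False l] eigvec2_eigen[OF A False] eigvec2_orthogonal[OF l]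
    unfolding orthonormal2_def l'_def by simp
  then show ?thesis
    by blast
qed

lemma inv_sqrt_spectral2:
  assumes A: "A \<in> carrier_mat 2 2" "hermitian 2 A" and u: "orthonormal2 u1 u2" "eigen2 A l1 u1" "eigen2 A l2 u2"
    and l: "0 < l1" "0 < l2"
  shows "inv_sqrt 2 A = spectral2 (1 / sqrt l1) (1 / sqrt l2) u1 u2"
proof (rule inv_sqrt_eqI[OF A(1)])
  show "psd 2 (spectral2 (1 / sqrt l1) (1 / sqrt l2) u1 u2)"
    using l by (intro psd_spectral2) simp_all
  have "spectral2 (1 / sqrt l1) (1 / sqrt l2) u1 u2 * spectral2 (1 / sqrt l1) (1 / sqrt l2) u1 u2 * A
      = spectral2 (1 / sqrt l1 * (1 / sqrt l1) * l1) (1 / sqrt l2 * (1 / sqrt l2) * l2) u1 u2"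
    unfolding spectral2_mult[OF u(1)] by (rule spectral2_mult_eigen[OF A u(2,3)])
  also have "\<dots> = 1\<^sub>m 2"
    using l spectral2_one[OF u(1)] by simp
  finally show "spectral2 (1 / sqrt l1) (1 / sqrt l2) u1 u2 * spectral2 (1 / sqrt l1) (1 / sqrt l2) u1 u2 * A = 1\<^sub>m 2" .
qed

lemma ptrace_B_carrier: "ptrace_B 2 d M \<in> carrier_mat 2 2"
  unfolding ptrace_B_def by simp

lemma hermitian_ptrace_B:
  assumes "hermitian (2 * d) M"
  shows "hermitian 2 (ptrace_B 2 d M)"
proof (rule hermitianI)
  fix i j :: nat assume "i < 2" "j < 2"
  then show "cnj (ptrace_B 2 d M $$ (j, i)) = ptrace_B 2 d M $$ (i, j)"
    using assms unfolding ptrace_B_def by (simp add: hermitian_cnj block_index_less)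
qed

lemma density_op_ptrace_B:
  assumes "density_op (2 * d) \<nu>"
  shows "0 < d" "hermitian 2 (ptrace_B 2 d \<nu>)"
    "Re (ptrace_B 2 d \<nu> $$ (0, 0)) + Re (ptrace_B 2 d \<nu> $$ (1, 1)) = 1"
proof -
  have \<nu>: "\<nu> \<in> carrier_mat (2 * d) (2 * d)" "hermitian (2 * d) \<nu>" and tr: "mtrace \<nu> = 1"
    using assms psd_carrier psd_hermitian unfolding density_op_def by auto
  show "0 < d"
    using \<nu>(1) tr unfolding mtrace_def by (cases "d = 0") auto
  show "hermitian 2 (ptrace_B 2 d \<nu>)"
    using \<nu>(2) by (rule hermitian_ptrace_B)
  have "ptrace_B 2 d \<nu> $$ (0, 0) + ptrace_B 2 d \<nu> $$ (1, 1) = 1"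
    using \<nu>(1) tr unfolding mtrace_def ptrace_B_def by (simp add: sum_lessThan_2_mult sum_lessThan_2)
  then show "Re (ptrace_B 2 d \<nu> $$ (0, 0)) + Re (ptrace_B 2 d \<nu> $$ (1, 1)) = 1"
    by (metis one_complex.sel(1) plus_complex.sel(1))
qed

lemma s_fun_t_fun_relations:
  fixes \<eta> :: real
  assumes "0 \<le> \<eta>" "\<eta> < 1"
  defines "y1 \<equiv> 1 / sqrt ((1 - \<eta>) / 2)" and "y2 \<equiv> 1 / sqrt ((1 + \<eta>) / 2)"
  shows "y1 * y2 = s_fun \<eta>" "y2\<^sup>2 = s_fun \<eta> - t_fun \<eta> / 2" "s_fun \<eta> \<le> y1\<^sup>2" "0 \<le> t_fun \<eta>"
proof -
  have pos: "0 < 1 - \<eta>" "0 < 1 + \<eta>" "0 < 1 - \<eta>\<^sup>2"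
    using assms by (auto simp: power_less_one_iff abs_less_iff)
  have "y1 * y2 = 1 / sqrt ((1 - \<eta>\<^sup>2) / 4)"
    unfolding y1_def y2_def by (simp add: real_sqrt_mult[symmetric] power2_eq_square algebra_simps)
  then show "y1 * y2 = s_fun \<eta>"
    unfolding s_fun_def by (simp add: real_sqrt_divide)
  have "y2\<^sup>2 = 2 / (1 + \<eta>)" and y1: "y1\<^sup>2 = 2 / (1 - \<eta>)"
    unfolding y1_def y2_def using pos by (simp_all add: power_divide)
  moreover have "4 / (1 + \<eta>) / 2 = 2 / (1 + \<eta>)" "4 / sqrt (1 - \<eta>\<^sup>2) / 2 = 2 / sqrt (1 - \<eta>\<^sup>2)"
    using pos by (simp_all add: field_simps)
  ultimately show "y2\<^sup>2 = s_fun \<eta> - t_fun \<eta> / 2"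
    unfolding s_fun_def t_fun_def by (simp only: diff_divide_distrib)
  have "1 - \<eta> \<le> sqrt (1 - \<eta>\<^sup>2)"
    using assms by (intro real_le_rsqrt) (simp add: power2_eq_square algebra_simps mult_left_le_one_le)
  then show "s_fun \<eta> \<le> y1\<^sup>2"
    unfolding y1 s_fun_def using pos by (simp add: frac_le)
  have "sqrt (1 - \<eta>\<^sup>2) \<le> 1 + \<eta>"
    using assms by (intro real_le_lsqrt) (simp_all add: power2_eq_square algebra_simps)
  then show "0 \<le> t_fun \<eta>"
    unfolding t_fun_def using pos by (simp add: frac_le)
qed

theorem mainTheorem8:
  fixes d :: nat and \<nu> :: "complex mat" and \<eta> :: real
  assumes "density_op (2 * d) \<nu>"
    and "0 \<le> \<eta>" and "\<eta> < 1"
    and "spectrum (ptrace_B 2 d \<nu>) =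
           {complex_of_real ((1 - \<eta>) / 2), complex_of_real ((1 + \<eta>) / 2)}"
  shows "loewner_le (2 * d)
           (complex_of_real (s_fun \<eta>) \<cdot>\<^sub>m \<nu>
              - complex_of_real (t_fun \<eta>) \<cdot>\<^sub>m kron 2 d ((1 / 2) \<cdot>\<^sub>m 1\<^sub>m 2) (ptrace_A 2 d \<nu>))
           (kron 2 d (inv_sqrt 2 (ptrace_B 2 d \<nu>)) (1\<^sub>m d) * \<nu>
              * kron 2 d (inv_sqrt 2 (ptrace_B 2 d \<nu>)) (1\<^sub>m d))"
proof -
  define A where "A = ptrace_B 2 d \<nu>"
  have \<nu>: "psd (2 * d) \<nu>"
    using assms(1) unfolding density_op_def by simp
  note marginal = density_op_ptrace_B[OF assms(1), folded A_def]
  have A: "A \<in> carrier_mat 2 2" "hermitian 2 A"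
    using ptrace_B_carrier marginal(2) by (simp_all add: A_def)
  have "Re (A $$ (0, 0)) + Re (A $$ (1, 1)) - (1 - \<eta>) / 2 = (1 + \<eta>) / 2"
    using marginal(3) by argo
  moreover have "complex_of_real ((1 - \<eta>) / 2) \<in> spectrum A"
    using assms(4) unfolding A_def by simp
  ultimately obtain u1 u2 where u: "orthonormal2 u1 u2" "eigen2 A ((1 - \<eta>) / 2) u1" "eigen2 A ((1 + \<eta>) / 2) u2"
    using hermitian2_eigenbasis[OF A(2) hermitian2_spectrum_char[OF A]] by metis
  then have "inv_sqrt 2 A = spectral2 (1 / sqrt ((1 - \<eta>) / 2)) (1 / sqrt ((1 + \<eta>) / 2)) u1 u2"
    using assms(2,3) by (intro inv_sqrt_spectral2[OF A]) simp_all
  then show ?thesis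
    using loewner_le_conj_kron_spectral2[OF marginal(1) \<nu> u(1) s_fun_t_fun_relations[OF assms(2,3)]]
    unfolding A_def by simp
qed

end
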